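(* Assume (R) and (F), and assume $0<q_t<1$ for all $t=0,\dots,T-1$. For $\alpha\in(0,\infty)^T$ let $H_\alpha(Z)$ denote the indifference price of $Z$ for the utilities $u_t(x;\alpha)=\frac{1}{\alpha_t}[1-\exp(-\alpha_tx)]$. Let $Z\in L^\infty$ with representation $Z=\sum_{t=1}^Tz_t1_{(t-1<\tau\le t)}+z_{T+1}1_{(T<\tau)}$ and set $H_\infty(Z)=\max\{z_1,\dots,z_{T+1}\}$. Then: (a) $E[Z]\le H_\alpha(Z)\le H_\infty(Z)$ for all $\alpha\in(0,\infty)^T$; (b) $H_\alpha(Z)\to E[Z]$ as $\alpha\to0+$ (i.e. $\alpha_t\to0+$ for all $t$); (c) $H_\alpha(Z)\to H_\infty(Z)$ as $\alpha\to\infty$ (i.e. $\alpha_t\to\infty$ for all $t$); (d) for every $\pi\in(E[Z],H_\infty(Z))$ and every $\alpha=(\alpha_1,\dots,\alpha_T)\in(0,\infty)^T$ there exists $p\in(0,\infty)$ with $\pi=H_{p\alpha}(Z)$, where $p\alpha=(p\alpha_1,\dots,p\alpha_T)$.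
   Context: Let $T\ge1$, $\mathbb{T}=\{1,\dots,T\}$, and $(\Omega,\mathcal{F},P)$ a probability space carrying a random variable $\tau$ with $\tau(\omega)>0$ for all $\omega$ and $P(\tau=s)=0$ for all $s\in[0,\infty)$. Let $D_t=1_{(\tau\le t)}$ for $t=0,\dots,T$ and $\mathcal{H}_t=\sigma(D_s:s=0,\dots,t)$. Condition (F): the filtration is $\mathcal{F}_t=\mathcal{H}_t$; $L^\infty=L^\infty(\Omega,\mathcal{F}_T,P)$. Condition (R): the interest rates $r_t\ge0$ are deterministic; $B_0=1$, $B_t=\prod_{k=1}^t(1+r_k)$, $\tilde X_t=X_t/B_t$. For $W\in L^\infty$, $\mathcal{A}(W)$ is the set of adapted processes $(Y_t)_{t\in\mathbb{T}}$ with $Y_t\in L^\infty$ and $\sum_t\tilde Y_t=W$ a.s.; $U_\alpha(W)=\sup\{\sum_tE[u_t(\tilde Y_t;\alpha)]:(Y_t)\in\mathcal{A}(W)\}$; the indifference price $H_\alpha(Z)$ (with initial wealth $w$; it does not depend on $w$) is the real number with $U_\alpha(w+H_\alpha(Z)-Z)=U_\alpha(w)$. Let $q_t=P(\tau\le t+1\mid\tau>t)$, $p_t=1-q_t$ for $t=0,\dots,T-1$. *)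

theory Defs
  imports "HOL-Probability.Probability"
begin

text \<open>Default indicator D_s = 1 (tau <= s); the generators of H_t = sigma(D_s : s = 0..t).\<close>
definition default_gen :: "'a measure \<Rightarrow> ('a \<Rightarrow> real) \<Rightarrow> nat \<Rightarrow> 'a set set" where
  "default_gen M \<tau> t = {{\<omega> \<in> space M. \<tau> \<omega> \<le> real s} | s. s \<le> t}"

text \<open>The filtration (F): F_t = H_t, as a measurable space on the sample space.\<close>
definition filt :: "'a measure \<Rightarrow> ('a \<Rightarrow> real) \<Rightarrow> nat \<Rightarrow> 'a measure" where
  "filt M \<tau> t = sigma (space M) (default_gen M \<tau> t)"

definition disc :: "(nat \<Rightarrow> real) \<Rightarrow> nat \<Rightarrow> real" where
  "disc r t = (\<Prod>k\<in>{1..t}. 1 + r k)"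

definition exp_util :: "(nat \<Rightarrow> real) \<Rightarrow> nat \<Rightarrow> real \<Rightarrow> real" where
  "exp_util \<alpha> t x = (1 - exp (- \<alpha> t * x)) / \<alpha> t"

definition admissible ::
  "'a measure \<Rightarrow> ('a \<Rightarrow> real) \<Rightarrow> nat \<Rightarrow> (nat \<Rightarrow> real) \<Rightarrow> ('a \<Rightarrow> real) \<Rightarrow> (nat \<Rightarrow> 'a \<Rightarrow> real) set" where
  "admissible M \<tau> T r W =
     {Y. (\<forall>t\<in>{1..T}. Y t \<in> borel_measurable (filt M \<tau> t)
                       \<and> (\<exists>C. \<forall>\<omega>\<in>space M. \<bar>Y t \<omega>\<bar> \<le> C))
         \<and> (AE \<omega> in M. (\<Sum>t\<in>{1..T}. Y t \<omega> / disc r t) = W \<omega>)}"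

definition value_fun ::
  "'a measure \<Rightarrow> ('a \<Rightarrow> real) \<Rightarrow> nat \<Rightarrow> (nat \<Rightarrow> real) \<Rightarrow> (nat \<Rightarrow> real) \<Rightarrow> ('a \<Rightarrow> real) \<Rightarrow> real" where
  "value_fun M \<tau> T r \<alpha> W =
     Sup {(\<Sum>t\<in>{1..T}. integral\<^sup>L M (\<lambda>\<omega>. exp_util \<alpha> t (Y t \<omega> / disc r t))) | Y. Y \<in> admissible M \<tau> T r W}"

definition indiff_price ::
  "'a measure \<Rightarrow> ('a \<Rightarrow> real) \<Rightarrow> nat \<Rightarrow> (nat \<Rightarrow> real) \<Rightarrow> (nat \<Rightarrow> real) \<Rightarrow> real \<Rightarrow> ('a \<Rightarrow> real) \<Rightarrow> real" where
  "indiff_price M \<tau> T r \<alpha> w Z =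
     (THE h. value_fun M \<tau> T r \<alpha> (\<lambda>\<omega>. w + h - Z \<omega>) = value_fun M \<tau> T r \<alpha> (\<lambda>\<omega>. w))"

definition hazard :: "'a measure \<Rightarrow> ('a \<Rightarrow> real) \<Rightarrow> nat \<Rightarrow> real" where
  "hazard M \<tau> t =
     measure M {\<omega> \<in> space M. real t < \<tau> \<omega> \<and> \<tau> \<omega> \<le> real t + 1}
       / measure M {\<omega> \<in> space M. real t < \<tau> \<omega>}"

definition claim :: "('a \<Rightarrow> real) \<Rightarrow> nat \<Rightarrow> (nat \<Rightarrow> real) \<Rightarrow> 'a \<Rightarrow> real" where
  "claim \<tau> T z \<omega> =
     (\<Sum>t\<in>{1..T}. z t * (if real t - 1 < \<tau> \<omega> \<and> \<tau> \<omega> \<le> real t then 1 else 0))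
     + z (T + 1) * (if real T < \<tau> \<omega> then 1 else 0)"

end

theory Submission
  imports Defs
begin

(* With A = sum_t 1/alpha_t, G(Y) = sum_t E[exp(-alpha_t Y_t/B_t)]/alpha_t and
   D(W) = inf {G(Y) | Y admissible for W} we have U_alpha(W) = A - D(W).  The tangent
   inequality A exp(-(sum_t x_t)/A) <= sum_t exp(-alpha_t x_t)/alpha_t gives
   D(W) >= A E[exp(-W/A)]; adding a constant c (split optimally over the periods) and a
   nonnegative F_T-measurable amount at T to an admissible process gives
   D(W + c + Delta) <= exp(-c/A) D(W).  Hence D(0) = A and H_alpha(Z) = A ln(D(-Z)/A), whence
   (a) E[Z] <= H_alpha(Z) <= H_inf, by Jensen and by the shift estimate with Delta = H_inf - Z;
   (b) H_alpha(Z) <= E[Z] + 4 M^2 alpha_T for |Z| <= M, by hedging Z entirely at T;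
   (c) H_alpha(Z) >= H_inf + A ln P(Z = H_inf), a probability that is positive by the
       hazard-rate assumption;
   (d) p |-> H_{p alpha}(Z) is continuous (ln D(-pZ) is Lipschitz in p), so (b), (c) and the
       intermediate value theorem give every price in (E[Z], H_inf). *)

text \<open>The tangent-line inequality for the exponential, summed with weights \<open>1 / \<alpha> t\<close>:
  splitting a total amount as \<open>x t\<close> over periods with risk aversions \<open>\<alpha> t\<close> costs at least as
  much as a single agent with the aggregate risk tolerance \<open>A\<close>.\<close>
lemma exp_sum_tangent:
  fixes \<alpha> x :: "'i \<Rightarrow> real"
  assumes pos: "\<forall>t\<in>I. 0 < \<alpha> t" and A: "A = (\<Sum>t\<in>I. 1 / \<alpha> t)" and A_pos: "A > 0"
  shows "A * exp (- (\<Sum>t\<in>I. x t) / A) \<le> (\<Sum>t\<in>I. exp (- \<alpha> t * x t) / \<alpha> t)"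
proof -
  define s where "s = (\<Sum>t\<in>I. x t)"
  have tangent: "exp (- s / A) * (1 / \<alpha> t - x t + s / A * (1 / \<alpha> t)) \<le> exp (- \<alpha> t * x t) / \<alpha> t"
    if "t \<in> I" for t
  proof -
    have \<alpha>t: "\<alpha> t > 0" using pos that by auto
    have "exp (- s / A) * (1 + (- \<alpha> t * x t + s / A)) \<le> exp (- s / A) * exp (- \<alpha> t * x t + s / A)"
      by (intro mult_left_mono exp_ge_add_one_self) auto
    also have "\<dots> = exp (- \<alpha> t * x t)" by (simp flip: exp_add)
    finally have "exp (- s / A) * (1 + (- \<alpha> t * x t + s / A)) / \<alpha> t \<le> exp (- \<alpha> t * x t) / \<alpha> t"
      using \<alpha>t by (intro divide_right_mono) auto
    moreover have "exp (- s / A) * (1 + (- \<alpha> t * x t + s / A)) / \<alpha> t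
        = exp (- s / A) * (1 / \<alpha> t - x t + s / A * (1 / \<alpha> t))"
      using \<alpha>t by (simp add: field_simps)
    ultimately show ?thesis by simp
  qed
  have "A * exp (- s / A) = exp (- s / A) * (A - s + s / A * A)" using A_pos by simp
  also have "\<dots> = (\<Sum>t\<in>I. exp (- s / A) * (1 / \<alpha> t - x t + s / A * (1 / \<alpha> t)))"
    unfolding s_def A by (simp add: sum_distrib_left sum_subtractf sum.distrib ring_distribs)
  also have "\<dots> \<le> (\<Sum>t\<in>I. exp (- \<alpha> t * x t) / \<alpha> t)" by (intro sum_mono tangent)
  finally show ?thesis unfolding s_def .
qed

lemma exp_le_quadratic:
  fixes u :: real assumes "\<bar>u\<bar> \<le> 1" shows "exp u \<le> 1 + u + u\<^sup>2"
proof (cases "u \<ge> 0")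
  case True then show ?thesis using exp_bound assms by auto
next
  case False
  define v where "v = - u"
  have v: "0 < v" "v \<le> 1" using False assms v_def by auto
  then have q: "1 - v + v\<^sup>2 > 0" by (simp add: power2_eq_square) (smt (verit) mult_pos_pos)
  have "1 \<le> (1 + v) * (1 - v + v\<^sup>2)" using v by (simp add: algebra_simps power2_eq_square)
  also have "\<dots> \<le> exp v * (1 - v + v\<^sup>2)" using q by (intro mult_right_mono) auto
  finally have "1 / exp v \<le> 1 - v + v\<^sup>2" by (simp add: field_simps)
  then show ?thesis unfolding v_def by (simp add: exp_minus field_simps)
qed

text \<open>Converting bounds on \<open>D\<close> into bounds on \<open>A ln (D / A)\<close>, the form in which
  indifference prices will appear.\<close>
lemma le_mult_ln_iff:
  fixes A D x :: real assumes "A > 0" "D > 0"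
  shows "x \<le> A * ln (D / A) \<longleftrightarrow> A * exp (x / A) \<le> D"
proof -
  have "x \<le> A * ln (D / A) \<longleftrightarrow> x / A \<le> ln (D / A)" using assms by (simp add: field_simps)
  also have "\<dots> \<longleftrightarrow> exp (x / A) \<le> D / A" using assms by (simp add: ln_ge_iff)
  also have "\<dots> \<longleftrightarrow> A * exp (x / A) \<le> D" using assms by (simp add: field_simps)
  finally show ?thesis .
qed

lemma mult_ln_le_iff:
  fixes A D x :: real assumes "A > 0" "D > 0"
  shows "A * ln (D / A) \<le> x \<longleftrightarrow> D \<le> A * exp (x / A)"
proof -
  have "A * ln (D / A) \<le> x \<longleftrightarrow> ln (D / A) \<le> x / A" using assms by (simp add: field_simps)
  also have "\<dots> \<longleftrightarrow> D / A \<le> exp (x / A)" using assms ln_le_cancel_iff[of "D / A" "exp (x / A)"] by simp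
  also have "\<dots> \<longleftrightarrow> D \<le> A * exp (x / A)" using assms by (simp add: field_simps)
  finally show ?thesis .
qed

text \<open>Supremum of a reflected set of reals, used to turn the supremum of expected utilities
  into an infimum of expected losses.\<close>
lemma cSup_const_minus:
  fixes S :: "real set"
  assumes ne: "S \<noteq> {}" and bdd: "bdd_below S"
  shows "Sup ((\<lambda>g. c - g) ` S) = c - Inf S"
proof (rule antisym)
  show "Sup ((\<lambda>g. c - g) ` S) \<le> c - Inf S"
    using ne by (intro cSup_least) (auto intro!: cInf_lower[OF _ bdd])
  have bdd_above: "bdd_above ((\<lambda>g. c - g) ` S)"
    using bdd by (intro bdd_aboveI[where M="c - Inf S"]) (auto intro!: cInf_lower[OF _ bdd])
  have "c - Sup ((\<lambda>g. c - g) ` S) \<le> Inf S"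
  proof (rule cInf_greatest[OF ne])
    fix g assume "g \<in> S"
    then have "c - g \<le> Sup ((\<lambda>g. c - g) ` S)" using bdd_above by (intro cSup_upper) auto
    then show "c - Sup ((\<lambda>g. c - g) ` S) \<le> g" by simp
  qed
  then show "c - Inf S \<le> Sup ((\<lambda>g. c - g) ` S)" by simp
qed

lemma continuous_on_pos_reals_attains:
  fixes f :: "real \<Rightarrow> real"
  assumes cont: "continuous_on {0<..} f" and "p1 > 0" "f p1 \<le> \<pi>" and "p2 > 0" "\<pi> \<le> f p2"
  shows "\<exists>p>0. f p = \<pi>"
proof -
  have cont': "continuous_on {a..b} f" if "a > 0" for a b
    using that by (intro continuous_on_subset[OF cont]) auto
  consider "p1 \<le> p2" | "p2 \<le> p1" by linarith
  then obtain p where "min p1 p2 \<le> p" "f p = \<pi>"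
  proof cases
    case 1
    then show ?thesis using IVT'[of f p1 \<pi> p2] cont'[of p1 p2] assms that by auto
  next
    case 2
    then show ?thesis using IVT2'[where f=f and a=p2 and b=p1 and y=\<pi>] cont'[of p2 p1] assms that by auto
  qed
  then show ?thesis using assms by (intro exI[of _ p]) auto
qed

section \<open>Exponential moments on a probability space\<close>

lemma (in prob_space) integrable_bounded:
  fixes f :: "'a \<Rightarrow> real"
  assumes "f \<in> borel_measurable M" and "\<forall>\<omega>\<in>space M. \<bar>f \<omega>\<bar> \<le> C"
  shows "integrable M f"
  using assms by (intro integrable_const_bound[where B=C]) auto

lemma (in prob_space) integrable_exp_bounded:
  fixes f :: "'a \<Rightarrow> real"
  assumes "f \<in> borel_measurable M" and "\<forall>\<omega>\<in>space M. \<bar>f \<omega>\<bar> \<le> C"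
  shows "integrable M (\<lambda>\<omega>. exp (f \<omega>))"
  using assms by (intro integrable_bounded[where C="exp C"]) auto

lemma (in prob_space) exp_expectation_le:
  fixes f :: "'a \<Rightarrow> real"
  assumes "f \<in> borel_measurable M" and "\<forall>\<omega>\<in>space M. \<bar>f \<omega>\<bar> \<le> C"
  shows "exp (expectation f) \<le> expectation (\<lambda>\<omega>. exp (f \<omega>))"
  using assms
  by (intro jensens_inequality[where q=exp and I=UNIV] exp_convex integrable_bounded
      integrable_exp_bounded) auto

lemma (in prob_space) exp_moment_centred_le:
  fixes X :: "'a \<Rightarrow> real"
  assumes X: "X \<in> borel_measurable M" and dev: "\<forall>\<omega>\<in>space M. \<bar>X \<omega> - expectation X\<bar> \<le> m"
    and a: "0 \<le> a" "a * m \<le> 1"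
  shows "expectation (\<lambda>\<omega>. exp (a * (X \<omega> - expectation X))) \<le> 1 + (a * m)\<^sup>2"
proof -
  let ?u = "\<lambda>\<omega>. a * (X \<omega> - expectation X)"
  have u_bound: "\<bar>?u \<omega>\<bar> \<le> a * m" if "\<omega> \<in> space M" for \<omega>
    using dev that a by (simp add: abs_mult mult_left_mono)
  have X_int: "integrable M X"
    using dev by (intro integrable_bounded[OF X, where C="\<bar>expectation X\<bar> + m"]) force
  have pointwise: "exp (?u \<omega>) \<le> 1 + ?u \<omega> + (a * m)\<^sup>2" if "\<omega> \<in> space M" for \<omega>
  proof -
    have "(?u \<omega>)\<^sup>2 \<le> (a * m)\<^sup>2"
      using power_mono[OF u_bound[OF that] abs_ge_zero, of 2] by simp
    then show ?thesis using exp_le_quadratic[of "?u \<omega>"] u_bound[OF that] a by linarith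
  qed
  have "expectation (\<lambda>\<omega>. exp (?u \<omega>)) \<le> expectation (\<lambda>\<omega>. 1 + ?u \<omega> + (a * m)\<^sup>2)"
    using pointwise X_int u_bound X
    by (intro integral_mono integrable_exp_bounded[where C="a * m"]) auto
  also have "\<dots> = 1 + (a * m)\<^sup>2"
    using X_int by (simp add: prob_space)
  finally show ?thesis .
qed

section \<open>The market generated by a default time\<close>

locale default_market = prob_space M for M :: "'a measure" +
  fixes \<tau> :: "'a \<Rightarrow> real" and T :: nat and r :: "nat \<Rightarrow> real"
  assumes tau_measurable: "\<tau> \<in> borel_measurable M"
    and horizon_pos: "T \<ge> 1"
    and rates_nonneg: "\<forall>k\<in>{1..T}. r k \<ge> 0"
begin

lemma default_gen_sets: "default_gen M \<tau> t \<subseteq> sets M"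
  unfolding default_gen_def using tau_measurable by (auto intro!: measurable)

lemma space_filt [simp]: "space (filt M \<tau> t) = space M"
  unfolding filt_def default_gen_def by (intro space_measure_of) auto

lemma sets_filt: "sets (filt M \<tau> t) = sigma_sets (space M) (default_gen M \<tau> t)"
  unfolding filt_def default_gen_def by (intro sets_measure_of) auto

lemma measurable_filt_imp_measurable:
  "f \<in> borel_measurable (filt M \<tau> t) \<Longrightarrow> f \<in> borel_measurable M"
  using measurable_mono[of borel borel "filt M \<tau> t" M]
    sets.sigma_sets_subset[OF default_gen_sets] unfolding sets_filt by auto

lemma default_event_filt: "s \<le> t \<Longrightarrow> {\<omega>\<in>space M. \<tau> \<omega> \<le> real s} \<in> sets (filt M \<tau> t)"
  unfolding sets_filt default_gen_def by (rule sigma_sets.Basic) auto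

lemma claim_measurable: "claim \<tau> T z \<in> borel_measurable (filt M \<tau> T)"
proof -
  have period: "{\<omega>\<in>space M. real t - 1 < \<tau> \<omega> \<and> \<tau> \<omega> \<le> real t} \<in> sets (filt M \<tau> T)"
    if "t \<in> {1..T}" for t
  proof -
    have "{\<omega>\<in>space M. real t - 1 < \<tau> \<omega> \<and> \<tau> \<omega> \<le> real t}
       = {\<omega>\<in>space M. \<tau> \<omega> \<le> real t} - {\<omega>\<in>space M. \<tau> \<omega> \<le> real (t - 1)}"
      using that by auto
    then show ?thesis
      using that default_event_filt[of t T] default_event_filt[of "t - 1" T] by auto
  qed
  have "space (filt M \<tau> T) - {\<omega>\<in>space M. \<tau> \<omega> \<le> real T} \<in> sets (filt M \<tau> T)"
    by (intro sets.compl_sets default_event_filt) simp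
  moreover have "space (filt M \<tau> T) - {\<omega>\<in>space M. \<tau> \<omega> \<le> real T} = {\<omega>\<in>space M. real T < \<tau> \<omega>}"
    by auto
  ultimately have survival: "{\<omega>\<in>space M. real T < \<tau> \<omega>} \<in> sets (filt M \<tau> T)" by simp
  show ?thesis
    unfolding claim_def using period survival
    by (intro borel_measurable_add borel_measurable_sum borel_measurable_times measurable_const
        measurable_If) auto
qed

lemma disc_pos: "t \<le> T \<Longrightarrow> disc r t > 0"
  unfolding disc_def using rates_nonneg by (intro prod_pos) (auto simp: add_pos_nonneg)

definition pos_aversion :: "(nat \<Rightarrow> real) \<Rightarrow> bool" where
  "pos_aversion \<alpha> \<longleftrightarrow> (\<forall>t\<in>{1..T}. 0 < \<alpha> t)"

definition tolerance :: "(nat \<Rightarrow> real) \<Rightarrow> real" where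
  "tolerance \<alpha> = (\<Sum>t\<in>{1..T}. 1 / \<alpha> t)"

text \<open>Expected exponential loss \<open>G(Y)\<close> of a consumption process; expected utility is
  \<open>tolerance \<alpha> - G(Y)\<close>.\<close>
definition exp_loss :: "(nat \<Rightarrow> real) \<Rightarrow> (nat \<Rightarrow> 'a \<Rightarrow> real) \<Rightarrow> real" where
  "exp_loss \<alpha> Y = (\<Sum>t\<in>{1..T}. (\<integral>\<omega>. exp (- \<alpha> t * (Y t \<omega> / disc r t)) \<partial>M) / \<alpha> t)"

definition min_loss :: "(nat \<Rightarrow> real) \<Rightarrow> ('a \<Rightarrow> real) \<Rightarrow> real" where
  "min_loss \<alpha> W = Inf (exp_loss \<alpha> ` admissible M \<tau> T r W)"

lemma tolerance_pos: "pos_aversion \<alpha> \<Longrightarrow> tolerance \<alpha> > 0"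
  unfolding tolerance_def pos_aversion_def using horizon_pos by (intro sum_pos) auto

lemma admissible_discounted:
  assumes "Y \<in> admissible M \<tau> T r W" "t \<in> {1..T}"
  shows "(\<lambda>\<omega>. Y t \<omega> / disc r t) \<in> borel_measurable M"
    and "\<exists>C. \<forall>\<omega>\<in>space M. \<bar>Y t \<omega> / disc r t\<bar> \<le> C"
proof -
  have "Y t \<in> borel_measurable (filt M \<tau> t)" and "\<exists>C. \<forall>\<omega>\<in>space M. \<bar>Y t \<omega>\<bar> \<le> C"
    using assms unfolding admissible_def by auto
  then obtain C where C: "\<forall>\<omega>\<in>space M. \<bar>Y t \<omega>\<bar> \<le> C" by blast
  have "Y t \<in> borel_measurable M"
    using \<open>Y t \<in> borel_measurable (filt M \<tau> t)\<close> by (rule measurable_filt_imp_measurable)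
  then show "(\<lambda>\<omega>. Y t \<omega> / disc r t) \<in> borel_measurable M" by simp
  have "disc r t > 0" using disc_pos assms by auto
  then show "\<exists>C. \<forall>\<omega>\<in>space M. \<bar>Y t \<omega> / disc r t\<bar> \<le> C"
    using C by (intro exI[of _ "C / disc r t"]) (auto simp: abs_div intro: divide_right_mono)
qed

lemma integrable_exp_admissible:
  assumes "Y \<in> admissible M \<tau> T r W" "t \<in> {1..T}"
  shows "integrable M (\<lambda>\<omega>. exp (- a * (Y t \<omega> / disc r t)))"
proof -
  obtain C where C: "\<forall>\<omega>\<in>space M. \<bar>Y t \<omega> / disc r t\<bar> \<le> C"
    using admissible_discounted[OF assms] by blast
  have "\<bar>- a * (Y t \<omega> / disc r t)\<bar> \<le> \<bar>a\<bar> * C" if "\<omega> \<in> space M" for \<omega>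
    using C that by (simp only: abs_mult abs_minus) (rule mult_left_mono, auto)
  moreover have "(\<lambda>\<omega>. - a * (Y t \<omega> / disc r t)) \<in> borel_measurable M"
    using admissible_discounted(1)[OF assms] by measurable
  ultimately show ?thesis by (intro integrable_exp_bounded[where C="\<bar>a\<bar> * C"]) auto
qed

lemma exp_loss_nonneg: "pos_aversion \<alpha> \<Longrightarrow> exp_loss \<alpha> Y \<ge> 0"
  unfolding exp_loss_def pos_aversion_def by (intro sum_nonneg divide_nonneg_pos) auto

lemma min_loss_le: "pos_aversion \<alpha> \<Longrightarrow> Y \<in> admissible M \<tau> T r W \<Longrightarrow> min_loss \<alpha> W \<le> exp_loss \<alpha> Y"
  unfolding min_loss_def using exp_loss_nonneg by (intro cInf_lower bdd_belowI[where m=0]) auto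

lemma min_loss_ge:
  "admissible M \<tau> T r W \<noteq> {} \<Longrightarrow> (\<And>Y. Y \<in> admissible M \<tau> T r W \<Longrightarrow> c \<le> exp_loss \<alpha> Y)
    \<Longrightarrow> c \<le> min_loss \<alpha> W"
  unfolding min_loss_def by (intro cInf_greatest) auto

lemma value_fun_eq:
  assumes pos: "pos_aversion \<alpha>" and ne: "admissible M \<tau> T r W \<noteq> {}"
  shows "value_fun M \<tau> T r \<alpha> W = tolerance \<alpha> - min_loss \<alpha> W"
proof -
  have utility: "(\<Sum>t\<in>{1..T}. integral\<^sup>L M (\<lambda>\<omega>. exp_util \<alpha> t (Y t \<omega> / disc r t)))
      = tolerance \<alpha> - exp_loss \<alpha> Y" if Y: "Y \<in> admissible M \<tau> T r W" for Y
  proof -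
    have "integral\<^sup>L M (\<lambda>\<omega>. exp_util \<alpha> t (Y t \<omega> / disc r t))
        = 1 / \<alpha> t - (\<integral>\<omega>. exp (- \<alpha> t * (Y t \<omega> / disc r t)) \<partial>M) / \<alpha> t" if t: "t \<in> {1..T}" for t
    proof -
      have "integral\<^sup>L M (\<lambda>\<omega>. exp_util \<alpha> t (Y t \<omega> / disc r t))
          = (\<integral>\<omega>. 1 - exp (- \<alpha> t * (Y t \<omega> / disc r t)) \<partial>M) / \<alpha> t"
        unfolding exp_util_def by simp
      also have "\<dots> = (1 - (\<integral>\<omega>. exp (- \<alpha> t * (Y t \<omega> / disc r t)) \<partial>M)) / \<alpha> t"
        using integrable_exp_admissible[OF Y t] by (simp add: prob_space)
      finally show ?thesis by (simp add: diff_divide_distrib)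
    qed
    then show ?thesis unfolding exp_loss_def tolerance_def by (simp add: sum_subtractf)
  qed
  have "{(\<Sum>t\<in>{1..T}. integral\<^sup>L M (\<lambda>\<omega>. exp_util \<alpha> t (Y t \<omega> / disc r t))) | Y. Y \<in> admissible M \<tau> T r W}
      = (\<lambda>g. tolerance \<alpha> - g) ` (exp_loss \<alpha> ` admissible M \<tau> T r W)"
    unfolding Setcompr_eq_image image_image using utility by (intro image_cong) auto
  moreover have "bdd_below (exp_loss \<alpha> ` admissible M \<tau> T r W)"
    using exp_loss_nonneg[OF pos] by (intro bdd_belowI[where m=0]) auto
  ultimately show ?thesis
    unfolding value_fun_def min_loss_def using ne by (simp add: cSup_const_minus)
qed

lemma le_exp_minus_mult_iff: "(x::real) \<le> exp (- a) * y \<longleftrightarrow> exp a * x \<le> y"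
proof -
  have "exp (- a) * y = y / exp a" by (simp add: exp_minus divide_inverse mult.commute)
  then show ?thesis by (simp add: pos_le_divide_eq mult.commute)
qed

text \<open>A constant \<open>c\<close> split over the periods in proportion to the risk tolerances
  \<open>1 / \<alpha> t\<close>: the split attaining equality in \<open>exp_sum_tangent\<close>.\<close>
definition const_split :: "(nat \<Rightarrow> real) \<Rightarrow> real \<Rightarrow> nat \<Rightarrow> real" where
  "const_split \<alpha> c t = c / (\<alpha> t * tolerance \<alpha>)"

lemma sum_const_split:
  assumes "pos_aversion \<alpha>" shows "(\<Sum>t\<in>{1..T}. const_split \<alpha> c t) = c"
proof -
  have "(\<Sum>t\<in>{1..T}. const_split \<alpha> c t) = c / tolerance \<alpha> * (\<Sum>t\<in>{1..T}. 1 / \<alpha> t)"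
    unfolding const_split_def sum_distrib_left by (intro sum.cong) (auto simp: field_simps)
  then show ?thesis using tolerance_pos[OF assms] unfolding tolerance_def by simp
qed

lemma exp_const_split:
  assumes "pos_aversion \<alpha>" "t \<in> {1..T}"
  shows "exp (- \<alpha> t * const_split \<alpha> c t) = exp (- c / tolerance \<alpha>)"
proof -
  have "\<alpha> t > 0" using assms unfolding pos_aversion_def by auto
  then show ?thesis unfolding const_split_def by simp
qed

definition shift_process ::
  "(nat \<Rightarrow> 'a \<Rightarrow> real) \<Rightarrow> (nat \<Rightarrow> real) \<Rightarrow> ('a \<Rightarrow> real) \<Rightarrow> nat \<Rightarrow> 'a \<Rightarrow> real" where
  "shift_process Y a \<Delta> t \<omega> = Y t \<omega> + disc r t * (a t + (if t = T then \<Delta> \<omega> else 0))"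

lemma discounted_shift_process:
  "t \<in> {1..T} \<Longrightarrow>
    shift_process Y a \<Delta> t \<omega> / disc r t = Y t \<omega> / disc r t + a t + (if t = T then \<Delta> \<omega> else 0)"
proof -
  assume "t \<in> {1..T}"
  then have "disc r t \<noteq> 0" using disc_pos[of t] by auto
  then show ?thesis unfolding shift_process_def by (simp add: add_divide_distrib add.assoc)
qed

lemma admissible_shift:
  assumes Y: "Y \<in> admissible M \<tau> T r W"
    and \<Delta>: "\<Delta> \<in> borel_measurable (filt M \<tau> T)" "\<forall>\<omega>\<in>space M. \<bar>\<Delta> \<omega>\<bar> \<le> K"
    and W': "\<forall>\<omega>\<in>space M. W' \<omega> = W \<omega> + (\<Sum>t\<in>{1..T}. a t) + \<Delta> \<omega>"
  shows "shift_process Y a \<Delta> \<in> admissible M \<tau> T r W'"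
proof -
  have component: "shift_process Y a \<Delta> t \<in> borel_measurable (filt M \<tau> t)
      \<and> (\<exists>C. \<forall>\<omega>\<in>space M. \<bar>shift_process Y a \<Delta> t \<omega>\<bar> \<le> C)" if t: "t \<in> {1..T}" for t
  proof -
    have Y_meas: "Y t \<in> borel_measurable (filt M \<tau> t)"
      and "\<exists>C. \<forall>\<omega>\<in>space M. \<bar>Y t \<omega>\<bar> \<le> C"
      using Y t unfolding admissible_def by auto
    then obtain C where C: "\<forall>\<omega>\<in>space M. \<bar>Y t \<omega>\<bar> \<le> C" by blast
    have "shift_process Y a \<Delta> t \<in> borel_measurable (filt M \<tau> t)"
      using Y_meas \<Delta>(1) unfolding shift_process_def by (cases "t = T") auto
    moreover have "\<bar>shift_process Y a \<Delta> t \<omega>\<bar> \<le> C + disc r t * (\<bar>a t\<bar> + K)"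
      if "\<omega> \<in> space M" for \<omega>
    proof -
      have "\<bar>a t + (if t = T then \<Delta> \<omega> else 0)\<bar> \<le> \<bar>a t\<bar> + K"
        using \<Delta>(2) that by (auto intro: order_trans[OF abs_triangle_ineq])
      then have "\<bar>disc r t * (a t + (if t = T then \<Delta> \<omega> else 0))\<bar> \<le> disc r t * (\<bar>a t\<bar> + K)"
        using disc_pos[of t] t by (simp add: abs_mult)
      moreover have "\<bar>Y t \<omega>\<bar> \<le> C" using C that by blast
      ultimately show ?thesis
        using abs_triangle_ineq[of "Y t \<omega>"] unfolding shift_process_def by linarith
    qed
    ultimately show ?thesis by blast
  qed
  have "AE \<omega> in M. (\<Sum>t\<in>{1..T}. Y t \<omega> / disc r t) = W \<omega>"
    using Y unfolding admissible_def by auto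
  then have "AE \<omega> in M. (\<Sum>t\<in>{1..T}. shift_process Y a \<Delta> t \<omega> / disc r t) = W' \<omega>"
  proof (rule AE_mp[OF _ AE_I2[OF impI]])
    fix \<omega> assume "\<omega> \<in> space M" "(\<Sum>t\<in>{1..T}. Y t \<omega> / disc r t) = W \<omega>"
    then show "(\<Sum>t\<in>{1..T}. shift_process Y a \<Delta> t \<omega> / disc r t) = W' \<omega>"
      using W' horizon_pos by (simp add: discounted_shift_process sum.distrib)
  qed
  with component show ?thesis unfolding admissible_def by blast
qed

lemma exp_loss_shift:
  "exp_loss \<alpha> (shift_process Y a \<Delta>) = (\<Sum>t\<in>{1..T}. exp (- \<alpha> t * a t) *
      (\<integral>\<omega>. exp (- \<alpha> t * (Y t \<omega> / disc r t) - \<alpha> t * (if t = T then \<Delta> \<omega> else 0)) \<partial>M) / \<alpha> t)"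
  unfolding exp_loss_def
proof (intro sum.cong refl)
  fix t assume t: "t \<in> {1..T}"
  have "- \<alpha> t * (shift_process Y a \<Delta> t \<omega> / disc r t) = - \<alpha> t * a t
      + (- \<alpha> t * (Y t \<omega> / disc r t) - \<alpha> t * (if t = T then \<Delta> \<omega> else 0))" for \<omega>
    unfolding discounted_shift_process[OF t] by (simp add: algebra_simps)
  then have "(\<lambda>\<omega>. exp (- \<alpha> t * (shift_process Y a \<Delta> t \<omega> / disc r t)))
      = (\<lambda>\<omega>. exp (- \<alpha> t * a t) *
          exp (- \<alpha> t * (Y t \<omega> / disc r t) - \<alpha> t * (if t = T then \<Delta> \<omega> else 0)))"
    by (simp only: exp_add)
  then show "(\<integral>\<omega>. exp (- \<alpha> t * (shift_process Y a \<Delta> t \<omega> / disc r t)) \<partial>M) / \<alpha> t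
      = exp (- \<alpha> t * a t) *
        (\<integral>\<omega>. exp (- \<alpha> t * (Y t \<omega> / disc r t) - \<alpha> t * (if t = T then \<Delta> \<omega> else 0)) \<partial>M) / \<alpha> t"
    by simp
qed

lemma exp_loss_shift_le:
  assumes pos: "pos_aversion \<alpha>" and Y: "Y \<in> admissible M \<tau> T r W"
    and \<Delta>: "\<Delta> \<in> borel_measurable (filt M \<tau> T)" "\<forall>\<omega>\<in>space M. \<Delta> \<omega> \<ge> 0"
  shows "exp_loss \<alpha> (shift_process Y (const_split \<alpha> c) \<Delta>) \<le> exp (- c / tolerance \<alpha>) * exp_loss \<alpha> Y"
proof -
  have "exp_loss \<alpha> (shift_process Y (const_split \<alpha> c) \<Delta>)
      \<le> (\<Sum>t\<in>{1..T}. exp (- c / tolerance \<alpha>) * (\<integral>\<omega>. exp (- \<alpha> t * (Y t \<omega> / disc r t)) \<partial>M) / \<alpha> t)"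
    unfolding exp_loss_shift
  proof (intro sum_mono)
    fix t assume t: "t \<in> {1..T}"
    have \<alpha>t: "\<alpha> t > 0" using pos t unfolding pos_aversion_def by auto
    let ?g = "\<lambda>\<omega>. exp (- \<alpha> t * (Y t \<omega> / disc r t) - \<alpha> t * (if t = T then \<Delta> \<omega> else 0))"
    have dominated: "?g \<omega> \<le> exp (- \<alpha> t * (Y t \<omega> / disc r t))" if "\<omega> \<in> space M" for \<omega>
      using \<Delta>(2) that \<alpha>t by auto
    have Y_int: "integrable M (\<lambda>\<omega>. exp (- \<alpha> t * (Y t \<omega> / disc r t)))"
      by (rule integrable_exp_admissible[OF Y t])
    have "?g \<in> borel_measurable M"
      using admissible_discounted(1)[OF Y t] measurable_filt_imp_measurable[OF \<Delta>(1)] by measurable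
    then have "integrable M ?g"
      using dominated by (intro Bochner_Integration.integrable_bound[OF Y_int]) auto
    then have "(\<integral>\<omega>. ?g \<omega> \<partial>M) \<le> (\<integral>\<omega>. exp (- \<alpha> t * (Y t \<omega> / disc r t)) \<partial>M)"
      using Y_int dominated by (intro integral_mono) auto
    then show "exp (- \<alpha> t * const_split \<alpha> c t) * (\<integral>\<omega>. ?g \<omega> \<partial>M) / \<alpha> t
        \<le> exp (- c / tolerance \<alpha>) * (\<integral>\<omega>. exp (- \<alpha> t * (Y t \<omega> / disc r t)) \<partial>M) / \<alpha> t"
      unfolding exp_const_split[OF pos t] using \<alpha>t by (intro divide_right_mono mult_left_mono) auto
  qed
  also have "\<dots> = exp (- c / tolerance \<alpha>) * exp_loss \<alpha> Y"
    unfolding exp_loss_def sum_distrib_left by (simp add: field_simps)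
  finally show ?thesis .
qed

lemma min_loss_shift:
  assumes pos: "pos_aversion \<alpha>" and ne: "admissible M \<tau> T r W \<noteq> {}"
    and \<Delta>: "\<Delta> \<in> borel_measurable (filt M \<tau> T)" "\<forall>\<omega>\<in>space M. \<bar>\<Delta> \<omega>\<bar> \<le> K"
      "\<forall>\<omega>\<in>space M. \<Delta> \<omega> \<ge> 0"
    and W': "\<forall>\<omega>\<in>space M. W' \<omega> = W \<omega> + c + \<Delta> \<omega>"
  shows "min_loss \<alpha> W' \<le> exp (- c / tolerance \<alpha>) * min_loss \<alpha> W"
    and "admissible M \<tau> T r W' \<noteq> {}"
proof -
  have shifted: "shift_process Y (const_split \<alpha> c) \<Delta> \<in> admissible M \<tau> T r W'"
    if "Y \<in> admissible M \<tau> T r W" for Y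
    using W' sum_const_split[OF pos] by (intro admissible_shift[OF that \<Delta>(1,2)]) auto
  have "exp (c / tolerance \<alpha>) * min_loss \<alpha> W' \<le> min_loss \<alpha> W"
  proof (rule min_loss_ge[OF ne])
    fix Y assume Y: "Y \<in> admissible M \<tau> T r W"
    have "min_loss \<alpha> W' \<le> exp_loss \<alpha> (shift_process Y (const_split \<alpha> c) \<Delta>)"
      by (rule min_loss_le[OF pos shifted[OF Y]])
    also have "\<dots> \<le> exp (- (c / tolerance \<alpha>)) * exp_loss \<alpha> Y"
      using exp_loss_shift_le[OF pos Y \<Delta>(1,3)] by simp
    finally show "exp (c / tolerance \<alpha>) * min_loss \<alpha> W' \<le> exp_loss \<alpha> Y"
      unfolding le_exp_minus_mult_iff .
  qed
  then have "min_loss \<alpha> W' \<le> exp (- (c / tolerance \<alpha>)) * min_loss \<alpha> W"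
    unfolding le_exp_minus_mult_iff .
  then show "min_loss \<alpha> W' \<le> exp (- c / tolerance \<alpha>) * min_loss \<alpha> W" by simp
  show "admissible M \<tau> T r W' \<noteq> {}" using ne shifted by blast
qed

lemma admissible_zero: "(\<lambda>t \<omega>. 0) \<in> admissible M \<tau> T r (\<lambda>\<omega>. 0)"
  unfolding admissible_def by auto

lemma exp_loss_zero: "exp_loss \<alpha> (\<lambda>t \<omega>. 0) = tolerance \<alpha>"
  unfolding exp_loss_def tolerance_def by (simp add: prob_space)

lemma min_loss_const_shift:
  assumes pos: "pos_aversion \<alpha>" and ne: "admissible M \<tau> T r W \<noteq> {}"
    and W': "\<forall>\<omega>\<in>space M. W' \<omega> = W \<omega> + c"
  shows "min_loss \<alpha> W' = exp (- c / tolerance \<alpha>) * min_loss \<alpha> W"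
    and "admissible M \<tau> T r W' \<noteq> {}"
proof -
  have zero: "(\<lambda>\<omega>. 0::real) \<in> borel_measurable (filt M \<tau> T)"
    "\<forall>\<omega>\<in>space M. \<bar>0::real\<bar> \<le> 0" "\<forall>\<omega>\<in>space M. (0::real) \<ge> 0" by auto
  have "\<forall>\<omega>\<in>space M. W' \<omega> = W \<omega> + c + 0" "\<forall>\<omega>\<in>space M. W \<omega> = W' \<omega> + - c + 0"
    using W' by auto
  note up = min_loss_shift[OF pos ne zero this(1)] and down = min_loss_shift[OF pos up(2) zero this(2)]
  show "admissible M \<tau> T r W' \<noteq> {}" by (fact up(2))
  have "min_loss \<alpha> W \<le> exp (- (- c / tolerance \<alpha>)) * min_loss \<alpha> W'"
    using down(1) by simp
  then have "exp (- c / tolerance \<alpha>) * min_loss \<alpha> W \<le> min_loss \<alpha> W'"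
    by (simp only: le_exp_minus_mult_iff)
  then show "min_loss \<alpha> W' = exp (- c / tolerance \<alpha>) * min_loss \<alpha> W"
    using up(1) by (intro antisym) auto
qed

lemma min_loss_hedge_at_horizon:
  assumes pos: "pos_aversion \<alpha>"
    and \<Delta>: "\<Delta> \<in> borel_measurable (filt M \<tau> T)" "\<forall>\<omega>\<in>space M. \<bar>\<Delta> \<omega>\<bar> \<le> K"
  shows "min_loss \<alpha> (\<lambda>\<omega>. c + \<Delta> \<omega>)
    \<le> exp (- c / tolerance \<alpha>) * (tolerance \<alpha> + ((\<integral>\<omega>. exp (- \<alpha> T * \<Delta> \<omega>) \<partial>M) - 1) / \<alpha> T)"
proof -
  let ?Y = "shift_process (\<lambda>t \<omega>. 0) (const_split \<alpha> c) \<Delta>"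
  let ?I = "\<integral>\<omega>. exp (- \<alpha> T * \<Delta> \<omega>) \<partial>M"
  have horizon: "T \<in> {1..T}" using horizon_pos by auto
  have "?Y \<in> admissible M \<tau> T r (\<lambda>\<omega>. c + \<Delta> \<omega>)"
    using sum_const_split[OF pos] by (intro admissible_shift[OF admissible_zero \<Delta>]) auto
  then have "min_loss \<alpha> (\<lambda>\<omega>. c + \<Delta> \<omega>) \<le> exp_loss \<alpha> ?Y" by (rule min_loss_le[OF pos])
  also have "\<dots> = (\<Sum>t\<in>{1..T}. exp (- c / tolerance \<alpha>) * (1 / \<alpha> t + (if t = T then (?I - 1) / \<alpha> T else 0)))"
    unfolding exp_loss_shift
  proof (intro sum.cong refl)
    fix t assume t: "t \<in> {1..T}"
    have "\<alpha> t > 0" using pos t unfolding pos_aversion_def by auto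
    then show "exp (- \<alpha> t * const_split \<alpha> c t) *
        (\<integral>\<omega>. exp (- \<alpha> t * (0 / disc r t) - \<alpha> t * (if t = T then \<Delta> \<omega> else 0)) \<partial>M) / \<alpha> t
      = exp (- c / tolerance \<alpha>) * (1 / \<alpha> t + (if t = T then (?I - 1) / \<alpha> T else 0))"
      unfolding exp_const_split[OF pos t] by (cases "t = T") (auto simp: prob_space field_simps)
  qed
  also have "\<dots> = exp (- c / tolerance \<alpha>) * (tolerance \<alpha> + (?I - 1) / \<alpha> T)"
    unfolding sum_distrib_left[symmetric] sum.distrib tolerance_def using horizon by simp
  finally show ?thesis .
qed

text \<open>\<open>D(W) \<ge> A E[exp (- W / A)]\<close>: no admissible process beats a single agent with risk
  tolerance \<open>A\<close> consuming \<open>W\<close> at once.\<close>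
lemma min_loss_lower:
  assumes pos: "pos_aversion \<alpha>" and ne: "admissible M \<tau> T r W \<noteq> {}"
    and W: "W \<in> borel_measurable M" "\<forall>\<omega>\<in>space M. \<bar>W \<omega>\<bar> \<le> K"
  shows "tolerance \<alpha> * (\<integral>\<omega>. exp (- W \<omega> / tolerance \<alpha>) \<partial>M) \<le> min_loss \<alpha> W"
proof (rule min_loss_ge[OF ne])
  fix Y assume Y: "Y \<in> admissible M \<tau> T r W"
  define A where "A = tolerance \<alpha>"
  have A_pos: "A > 0" using tolerance_pos[OF pos] A_def by simp
  have \<alpha>_pos: "\<forall>t\<in>{1..T}. 0 < \<alpha> t" using pos unfolding pos_aversion_def .
  let ?loss = "\<lambda>\<omega>. \<Sum>t\<in>{1..T}. exp (- \<alpha> t * (Y t \<omega> / disc r t)) / \<alpha> t"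
  have terms_int: "integrable M (\<lambda>\<omega>. exp (- \<alpha> t * (Y t \<omega> / disc r t)) / \<alpha> t)" if "t \<in> {1..T}" for t
    using integrable_exp_admissible[OF Y that] by auto
  have "(\<lambda>\<omega>. - W \<omega> / A) \<in> borel_measurable M" using W(1) by measurable
  moreover have "\<forall>\<omega>\<in>space M. \<bar>- W \<omega> / A\<bar> \<le> K / A"
    using W(2) A_pos by (auto simp: abs_div intro: divide_right_mono)
  ultimately have "integrable M (\<lambda>\<omega>. exp (- W \<omega> / A))" by (rule integrable_exp_bounded)
  moreover have "AE \<omega> in M. (\<Sum>t\<in>{1..T}. Y t \<omega> / disc r t) = W \<omega>"
    using Y unfolding admissible_def by auto
  then have "AE \<omega> in M. A * exp (- W \<omega> / A) \<le> ?loss \<omega>"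
  proof (rule eventually_mono)
    fix \<omega> assume "(\<Sum>t\<in>{1..T}. Y t \<omega> / disc r t) = W \<omega>"
    then show "A * exp (- W \<omega> / A) \<le> ?loss \<omega>"
      using exp_sum_tangent[OF \<alpha>_pos, of A "\<lambda>t. Y t \<omega> / disc r t"] A_pos
      unfolding A_def tolerance_def by simp
  qed
  ultimately have "(\<integral>\<omega>. A * exp (- W \<omega> / A) \<partial>M) \<le> (\<integral>\<omega>. ?loss \<omega> \<partial>M)"
    using terms_int by (intro integral_mono_AE) auto
  also have "\<dots> = exp_loss \<alpha> Y"
    unfolding exp_loss_def using terms_int by (subst Bochner_Integration.integral_sum) auto
  finally show "tolerance \<alpha> * (\<integral>\<omega>. exp (- W \<omega> / tolerance \<alpha>) \<partial>M) \<le> exp_loss \<alpha> Y"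
    unfolding A_def by simp
qed

lemma min_loss_zero: assumes pos: "pos_aversion \<alpha>" shows "min_loss \<alpha> (\<lambda>\<omega>. 0) = tolerance \<alpha>"
proof (rule antisym)
  show "min_loss \<alpha> (\<lambda>\<omega>. 0) \<le> tolerance \<alpha>"
    using min_loss_le[OF pos admissible_zero] exp_loss_zero by simp
  have "tolerance \<alpha> * (\<integral>\<omega>. exp (- 0 / tolerance \<alpha>) \<partial>M) \<le> min_loss \<alpha> (\<lambda>\<omega>. 0)"
    using admissible_zero by (intro min_loss_lower[OF pos, where K=0]) auto
  then show "tolerance \<alpha> \<le> min_loss \<alpha> (\<lambda>\<omega>. 0)" by (simp add: prob_space)
qed

text \<open>Multiplying all risk aversions by \<open>p\<close> is the same as multiplying the wealth by \<open>p\<close>.\<close>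

lemma admissible_scale:
  assumes "Y \<in> admissible M \<tau> T r W"
  shows "(\<lambda>t \<omega>. p * Y t \<omega>) \<in> admissible M \<tau> T r (\<lambda>\<omega>. p * W \<omega>)"
proof -
  have comp: "\<forall>t\<in>{1..T}. Y t \<in> borel_measurable (filt M \<tau> t) \<and> (\<exists>C. \<forall>\<omega>\<in>space M. \<bar>Y t \<omega>\<bar> \<le> C)"
    and sum: "AE \<omega> in M. (\<Sum>t\<in>{1..T}. Y t \<omega> / disc r t) = W \<omega>"
    using assms unfolding admissible_def by auto
  have "\<forall>t\<in>{1..T}. (\<lambda>\<omega>. p * Y t \<omega>) \<in> borel_measurable (filt M \<tau> t)
      \<and> (\<exists>C. \<forall>\<omega>\<in>space M. \<bar>p * Y t \<omega>\<bar> \<le> C)"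
  proof
    fix t assume "t \<in> {1..T}"
    then obtain C where "Y t \<in> borel_measurable (filt M \<tau> t)" "\<forall>\<omega>\<in>space M. \<bar>Y t \<omega>\<bar> \<le> C"
      using comp by blast
    then show "(\<lambda>\<omega>. p * Y t \<omega>) \<in> borel_measurable (filt M \<tau> t) \<and> (\<exists>C. \<forall>\<omega>\<in>space M. \<bar>p * Y t \<omega>\<bar> \<le> C)"
      by (auto simp: abs_mult intro!: exI[of _ "\<bar>p\<bar> * C"] mult_left_mono)
  qed
  moreover have "AE \<omega> in M. (\<Sum>t\<in>{1..T}. p * Y t \<omega> / disc r t) = p * W \<omega>"
  proof (rule eventually_mono[OF sum])
    fix \<omega> assume "(\<Sum>t\<in>{1..T}. Y t \<omega> / disc r t) = W \<omega>"
    moreover have "(\<Sum>t\<in>{1..T}. p * Y t \<omega> / disc r t) = p * (\<Sum>t\<in>{1..T}. Y t \<omega> / disc r t)"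
      by (simp add: sum_distrib_left)
    ultimately show "(\<Sum>t\<in>{1..T}. p * Y t \<omega> / disc r t) = p * W \<omega>" by simp
  qed
  ultimately show ?thesis unfolding admissible_def by auto
qed

lemma exp_loss_scale: "exp_loss (\<lambda>t. p * \<alpha> t) Y = exp_loss \<alpha> (\<lambda>t \<omega>. p * Y t \<omega>) / p"
  unfolding exp_loss_def by (simp add: sum_divide_distrib ac_simps)

lemma tolerance_scale: "tolerance (\<lambda>t. p * \<alpha> t) = tolerance \<alpha> / p"
  unfolding tolerance_def by (simp add: sum_divide_distrib ac_simps)

lemma min_loss_scale:
  assumes pos: "pos_aversion \<alpha>" and p: "p > 0" and ne: "admissible M \<tau> T r W \<noteq> {}"
  shows "min_loss (\<lambda>t. p * \<alpha> t) W = min_loss \<alpha> (\<lambda>\<omega>. p * W \<omega>) / p"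
proof (rule antisym)
  have pos': "pos_aversion (\<lambda>t. p * \<alpha> t)" using pos p unfolding pos_aversion_def by auto
  have "p * min_loss (\<lambda>t. p * \<alpha> t) W \<le> min_loss \<alpha> (\<lambda>\<omega>. p * W \<omega>)"
  proof (rule min_loss_ge)
    show "admissible M \<tau> T r (\<lambda>\<omega>. p * W \<omega>) \<noteq> {}" using ne admissible_scale by blast
    fix Y assume "Y \<in> admissible M \<tau> T r (\<lambda>\<omega>. p * W \<omega>)"
    then have "(\<lambda>t \<omega>. (1 / p) * Y t \<omega>) \<in> admissible M \<tau> T r (\<lambda>\<omega>. (1 / p) * (p * W \<omega>))"
      by (rule admissible_scale)
    then have "(\<lambda>t \<omega>. (1 / p) * Y t \<omega>) \<in> admissible M \<tau> T r W" using p by simp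
    then have "min_loss (\<lambda>t. p * \<alpha> t) W \<le> exp_loss \<alpha> Y / p"
      using min_loss_le[OF pos'] p unfolding exp_loss_scale by fastforce
    then show "p * min_loss (\<lambda>t. p * \<alpha> t) W \<le> exp_loss \<alpha> Y" using p by (simp add: field_simps)
  qed
  then show "min_loss (\<lambda>t. p * \<alpha> t) W \<le> min_loss \<alpha> (\<lambda>\<omega>. p * W \<omega>) / p"
    using p by (simp add: field_simps)
  show "min_loss \<alpha> (\<lambda>\<omega>. p * W \<omega>) / p \<le> min_loss (\<lambda>t. p * \<alpha> t) W"
  proof (rule min_loss_ge[OF ne])
    fix Y assume "Y \<in> admissible M \<tau> T r W"
    then have "min_loss \<alpha> (\<lambda>\<omega>. p * W \<omega>) \<le> exp_loss \<alpha> (\<lambda>t \<omega>. p * Y t \<omega>)"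
      by (intro min_loss_le[OF pos] admissible_scale)
    then show "min_loss \<alpha> (\<lambda>\<omega>. p * W \<omega>) / p \<le> exp_loss (\<lambda>t. p * \<alpha> t) Y"
      unfolding exp_loss_scale using p by (simp add: divide_right_mono)
  qed
qed

end

section \<open>The defaultable claim\<close>

locale claim_market = default_market +
  fixes z :: "nat \<Rightarrow> real" and w :: real
  assumes tau_pos: "\<forall>\<omega>\<in>space M. \<tau> \<omega> > 0"
    and hazard_bounds: "\<forall>t<T. 0 < hazard M \<tau> t \<and> hazard M \<tau> t < 1"
begin

abbreviation Z :: "'a \<Rightarrow> real" where "Z \<equiv> claim \<tau> T z"

definition claim_bound :: real where "claim_bound = (\<Sum>t\<in>{1..T}. \<bar>z t\<bar>) + \<bar>z (T + 1)\<bar>"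

definition max_payoff :: real where "max_payoff = Max (z ` {1..T+1})"

definition mean_payoff :: real where "mean_payoff = (\<integral>\<omega>. Z \<omega> \<partial>M)"

definition price :: "(nat \<Rightarrow> real) \<Rightarrow> real" where "price \<alpha> = indiff_price M \<tau> T r \<alpha> w Z"

lemma claim_abs_le: "\<bar>Z \<omega>\<bar> \<le> claim_bound"
proof -
  have "\<bar>\<Sum>t\<in>{1..T}. z t * (if real t - 1 < \<tau> \<omega> \<and> \<tau> \<omega> \<le> real t then 1 else 0)\<bar>
      \<le> (\<Sum>t\<in>{1..T}. \<bar>z t\<bar>)"
    by (rule order_trans[OF sum_abs sum_mono]) auto
  moreover have "\<bar>z (T + 1) * (if real T < \<tau> \<omega> then 1 else 0)\<bar> \<le> \<bar>z (T + 1)\<bar>" by auto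
  ultimately show ?thesis
    unfolding claim_def claim_bound_def using abs_triangle_ineq by (smt (verit))
qed

lemma claim_bound_nonneg: "claim_bound \<ge> 0"
  using claim_abs_le order_trans abs_ge_zero by blast

lemma claim_borel: "Z \<in> borel_measurable M"
  using claim_measurable by (rule measurable_filt_imp_measurable)

lemma claim_integrable: "integrable M Z"
  using claim_abs_le by (intro integrable_bounded[OF claim_borel]) auto

lemma mean_payoff_abs_le: "\<bar>mean_payoff\<bar> \<le> claim_bound"
proof -
  have "\<bar>mean_payoff\<bar> \<le> (\<integral>\<omega>. \<bar>Z \<omega>\<bar> \<partial>M)"
    unfolding mean_payoff_def by (rule integral_abs_bound)
  also have "\<dots> \<le> (\<integral>\<omega>. claim_bound \<partial>M)"
    using claim_integrable claim_abs_le by (intro integral_mono) auto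
  finally show ?thesis by (simp add: prob_space)
qed

lemma claim_on_period:
  assumes k: "k \<in> {1..T}" and \<tau>: "real k - 1 < \<tau> \<omega>" "\<tau> \<omega> \<le> real k"
  shows "Z \<omega> = z k"
proof -
  have period_iff: "(real t - 1 < \<tau> \<omega> \<and> \<tau> \<omega> \<le> real t) \<longleftrightarrow> t = k" for t :: nat
  proof
    assume "real t - 1 < \<tau> \<omega> \<and> \<tau> \<omega> \<le> real t"
    then have "real t - 1 < real k" "real k - 1 < real t" using \<tau> by linarith+
    then show "t = k" by linarith
  qed (use \<tau> in auto)
  have "(\<Sum>t\<in>{1..T}. z t * (if real t - 1 < \<tau> \<omega> \<and> \<tau> \<omega> \<le> real t then 1 else 0))
      = (\<Sum>t\<in>{1..T}. if t = k then z t else 0)" using period_iff by (intro sum.cong) auto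
  then show ?thesis unfolding claim_def using \<tau> k by auto
qed

lemma claim_after_horizon: "real T < \<tau> \<omega> \<Longrightarrow> Z \<omega> = z (T + 1)"
  unfolding claim_def by (auto intro!: sum.neutral)

lemma claim_value: assumes "\<tau> \<omega> > 0" shows "\<exists>k\<in>{1..T+1}. Z \<omega> = z k"
proof (cases "real T < \<tau> \<omega>")
  case True then show ?thesis using claim_after_horizon by auto
next
  case False
  define k where "k = nat \<lceil>\<tau> \<omega>\<rceil>"
  have ceil: "\<lceil>\<tau> \<omega>\<rceil> \<ge> 1" using assms le_ceiling_iff[of 1 "\<tau> \<omega>"] by simp
  then have k_eq: "real k = of_int \<lceil>\<tau> \<omega>\<rceil>" unfolding k_def by simp
  then have k: "real k - 1 < \<tau> \<omega>" "\<tau> \<omega> \<le> real k"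
    using ceiling_correct[of "\<tau> \<omega>"] by auto
  have "real k \<ge> 1" using k_eq ceil by simp
  then have "1 \<le> k" by simp
  moreover have "k \<le> T" using k False by linarith
  ultimately have "Z \<omega> = z k" using claim_on_period[of k \<omega>] k by auto
  then show ?thesis using \<open>k \<le> T\<close> \<open>1 \<le> k\<close> by force
qed

lemma claim_le_max: "\<omega> \<in> space M \<Longrightarrow> Z \<omega> \<le> max_payoff"
  using claim_value[of \<omega>] tau_pos unfolding max_payoff_def by (auto intro!: Max_ge)

lemma prob_default_period_pos:
  assumes k: "k \<in> {1..T}"
  shows "prob {\<omega>\<in>space M. real k - 1 < \<tau> \<omega> \<and> \<tau> \<omega> \<le> real k} > 0"
proof -
  have "0 < hazard M \<tau> (k - 1)" using hazard_bounds k by auto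
  moreover have "hazard M \<tau> (k - 1) = prob {\<omega>\<in>space M. real k - 1 < \<tau> \<omega> \<and> \<tau> \<omega> \<le> real k}
      / prob {\<omega>\<in>space M. real k - 1 < \<tau> \<omega>}"
    unfolding hazard_def using k by (simp add: of_nat_diff)
  ultimately show ?thesis by (auto simp: zero_less_divide_iff)
qed

lemma prob_survival_pos: "prob {\<omega>\<in>space M. real T < \<tau> \<omega>} > 0"
proof -
  let ?N = "{\<omega>\<in>space M. real T - 1 < \<tau> \<omega> \<and> \<tau> \<omega> \<le> real T}"
  let ?S = "{\<omega>\<in>space M. real T < \<tau> \<omega>}"
  let ?D = "{\<omega>\<in>space M. real T - 1 < \<tau> \<omega>}"
  have hazard_T: "0 < hazard M \<tau> (T - 1)" "hazard M \<tau> (T - 1) < 1"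
    using hazard_bounds horizon_pos by auto
  have "hazard M \<tau> (T - 1) = prob ?N / prob ?D"
    unfolding hazard_def using horizon_pos by (simp add: of_nat_diff)
  with hazard_T have "prob ?N < prob ?D"
    by (auto simp: zero_less_divide_iff divide_less_eq)
  moreover have "?D = ?N \<union> ?S" "?N \<inter> ?S = {}" by auto
  moreover have "?N \<in> sets M" "?S \<in> sets M" using tau_measurable by measurable
  ultimately show ?thesis using finite_measure_Union[of ?N ?S] by simp
qed

lemma max_payoff_event: "\<exists>S\<in>sets M. prob S > 0 \<and> (\<forall>\<omega>\<in>S. Z \<omega> = max_payoff)"
proof -
  have "max_payoff \<in> z ` {1..T+1}" unfolding max_payoff_def by (intro Max_in) auto
  then obtain k where k: "k \<in> {1..T+1}" "z k = max_payoff" by auto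
  show ?thesis
  proof (cases "k \<le> T")
    case True
    let ?S = "{\<omega>\<in>space M. real k - 1 < \<tau> \<omega> \<and> \<tau> \<omega> \<le> real k}"
    have "?S \<in> sets M" using tau_measurable by measurable
    moreover have "\<forall>\<omega>\<in>?S. Z \<omega> = max_payoff" using claim_on_period[of k] True k by auto
    ultimately show ?thesis using prob_default_period_pos[of k] True k(1) by auto
  next
    case False
    then have "k = T + 1" using k(1) by auto
    let ?S = "{\<omega>\<in>space M. real T < \<tau> \<omega>}"
    have "?S \<in> sets M" using tau_measurable by measurable
    moreover have "\<forall>\<omega>\<in>?S. Z \<omega> = max_payoff"
      using claim_after_horizon k(2) \<open>k = T + 1\<close> by auto
    ultimately show ?thesis using prob_survival_pos by auto
  qed
qed

lemma admissible_neg_claim: "admissible M \<tau> T r (\<lambda>\<omega>. - Z \<omega>) \<noteq> {}"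
proof -
  have "(\<lambda>\<omega>. - Z \<omega>) \<in> borel_measurable (filt M \<tau> T)"
    by (rule borel_measurable_uminus[OF claim_measurable])
  moreover have "\<forall>\<omega>\<in>space M. \<bar>- Z \<omega>\<bar> \<le> claim_bound" using claim_abs_le by simp
  ultimately have "shift_process (\<lambda>t \<omega>. 0) (\<lambda>t. 0) (\<lambda>\<omega>. - Z \<omega>) \<in> admissible M \<tau> T r (\<lambda>\<omega>. - Z \<omega>)"
    by (intro admissible_shift[OF admissible_zero]) auto
  then show ?thesis by blast
qed

text \<open>Selling \<open>Z\<close> costs at least as much as under a single exponential utility with risk
  tolerance \<open>A\<close>, and by Jensen at least as much as selling \<open>E[Z]\<close> for sure.\<close>
lemma min_loss_neg_claim_lower:
  assumes pos: "pos_aversion \<alpha>"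
  shows "tolerance \<alpha> * (\<integral>\<omega>. exp (Z \<omega> / tolerance \<alpha>) \<partial>M) \<le> min_loss \<alpha> (\<lambda>\<omega>. - Z \<omega>)"
  using min_loss_lower[OF pos admissible_neg_claim, of claim_bound] claim_borel claim_abs_le
  by simp

lemma min_loss_neg_claim_mean:
  assumes pos: "pos_aversion \<alpha>"
  shows "tolerance \<alpha> * exp (mean_payoff / tolerance \<alpha>) \<le> min_loss \<alpha> (\<lambda>\<omega>. - Z \<omega>)"
proof -
  have A: "tolerance \<alpha> > 0" by (rule tolerance_pos[OF pos])
  have "\<forall>\<omega>\<in>space M. \<bar>Z \<omega> / tolerance \<alpha>\<bar> \<le> claim_bound / tolerance \<alpha>"
    using claim_abs_le A by (auto simp: abs_div intro: divide_right_mono)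
  then have "exp (\<integral>\<omega>. Z \<omega> / tolerance \<alpha> \<partial>M) \<le> (\<integral>\<omega>. exp (Z \<omega> / tolerance \<alpha>) \<partial>M)"
    using claim_borel by (intro exp_expectation_le) auto
  then have "exp (mean_payoff / tolerance \<alpha>) \<le> (\<integral>\<omega>. exp (Z \<omega> / tolerance \<alpha>) \<partial>M)"
    unfolding mean_payoff_def by simp
  then show ?thesis
    using A by (intro order_trans[OF _ min_loss_neg_claim_lower[OF pos]] mult_left_mono) auto
qed

lemma min_loss_neg_claim_pos: "pos_aversion \<alpha> \<Longrightarrow> min_loss \<alpha> (\<lambda>\<omega>. - Z \<omega>) > 0"
  using min_loss_neg_claim_mean tolerance_pos by (meson exp_gt_zero mult_pos_pos less_le_trans)

text \<open>The indifference price equals \<open>A ln (D(-Z) / A)\<close>; in particular it is independent of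
  the initial wealth.\<close>
lemma price_formula:
  assumes pos: "pos_aversion \<alpha>"
  shows "price \<alpha> = tolerance \<alpha> * ln (min_loss \<alpha> (\<lambda>\<omega>. - Z \<omega>) / tolerance \<alpha>)"
proof -
  define A where "A = tolerance \<alpha>"
  define D where "D = min_loss \<alpha> (\<lambda>\<omega>. - Z \<omega>)"
  have A_pos: "A > 0" using tolerance_pos[OF pos] A_def by simp
  have D_pos: "D > 0" using min_loss_neg_claim_pos[OF pos] D_def by simp
  have value_sold: "value_fun M \<tau> T r \<alpha> (\<lambda>\<omega>. w + h - Z \<omega>) = A - exp (- (w + h) / A) * D" for h
  proof -
    have "\<forall>\<omega>\<in>space M. w + h - Z \<omega> = - Z \<omega> + (w + h)" by simp
    note shifted = min_loss_const_shift[OF pos admissible_neg_claim this]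
    show ?thesis using value_fun_eq[OF pos shifted(2)] shifted(1) unfolding A_def D_def by simp
  qed
  have value_kept: "value_fun M \<tau> T r \<alpha> (\<lambda>\<omega>. w) = A - exp (- w / A) * A"
  proof -
    have "\<forall>\<omega>\<in>space M. w = 0 + w" by simp
    note shifted = min_loss_const_shift[OF pos _ this] 
    show ?thesis
      using value_fun_eq[OF pos shifted(2)] shifted(1) min_loss_zero[OF pos] admissible_zero
      unfolding A_def by auto
  qed
  have indifferent: "value_fun M \<tau> T r \<alpha> (\<lambda>\<omega>. w + h - Z \<omega>) = value_fun M \<tau> T r \<alpha> (\<lambda>\<omega>. w)
      \<longleftrightarrow> h = A * ln (D / A)" for h
  proof -
    have "exp (- (w + h) / A) = exp (- w / A) * exp (- h / A)"
      by (simp add: diff_divide_distrib flip: exp_add)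
    then have "value_fun M \<tau> T r \<alpha> (\<lambda>\<omega>. w + h - Z \<omega>) = value_fun M \<tau> T r \<alpha> (\<lambda>\<omega>. w)
        \<longleftrightarrow> exp (- h / A) * D = A"
      unfolding value_sold value_kept by (simp add: mult.assoc)
    also have "\<dots> \<longleftrightarrow> exp (- h / A) = A / D" using D_pos by (simp add: field_simps)
    also have "\<dots> \<longleftrightarrow> - h / A = ln (A / D)" using A_pos D_pos by (metis divide_pos_pos exp_ln ln_exp)
    also have "\<dots> \<longleftrightarrow> h = A * ln (D / A)" using A_pos D_pos by (auto simp: ln_div field_simps)
    finally show ?thesis .
  qed
  show ?thesis unfolding price_def indiff_price_def indifferent A_def D_def by simp
qed

lemma price_ge_mean: assumes pos: "pos_aversion \<alpha>" shows "mean_payoff \<le> price \<alpha>"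
  unfolding price_formula[OF pos]
  using le_mult_ln_iff[OF tolerance_pos[OF pos] min_loss_neg_claim_pos[OF pos]]
    min_loss_neg_claim_mean[OF pos] by simp

lemma price_le_max: assumes pos: "pos_aversion \<alpha>" shows "price \<alpha> \<le> max_payoff"
proof -
  have "(\<lambda>\<omega>. max_payoff - Z \<omega>) \<in> borel_measurable (filt M \<tau> T)"
    using claim_measurable by measurable
  moreover have "\<forall>\<omega>\<in>space M. \<bar>max_payoff - Z \<omega>\<bar> \<le> \<bar>max_payoff\<bar> + claim_bound"
    using claim_abs_le by (smt (verit))
  moreover have "\<forall>\<omega>\<in>space M. max_payoff - Z \<omega> \<ge> 0" using claim_le_max by auto
  moreover have "\<forall>\<omega>\<in>space M. - Z \<omega> = 0 + - max_payoff + (max_payoff - Z \<omega>)" by simp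
  ultimately have "min_loss \<alpha> (\<lambda>\<omega>. - Z \<omega>) \<le> exp (- (- max_payoff) / tolerance \<alpha>) * min_loss \<alpha> (\<lambda>\<omega>. 0)"
    using admissible_zero by (intro min_loss_shift(1)[OF pos]) auto
  then have "min_loss \<alpha> (\<lambda>\<omega>. - Z \<omega>) \<le> tolerance \<alpha> * exp (max_payoff / tolerance \<alpha>)"
    unfolding min_loss_zero[OF pos] by (simp add: mult.commute)
  then show ?thesis
    unfolding price_formula[OF pos]
    using mult_ln_le_iff[OF tolerance_pos[OF pos] min_loss_neg_claim_pos[OF pos]] by simp
qed

text \<open>For (b): hedging all of \<open>Z - E[Z]\<close> at the horizon gives a price within
  \<open>4 M\<^sup>2 \<alpha> T\<close> of the mean.\<close>
lemma price_le_mean_plus: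
  assumes pos: "pos_aversion \<alpha>" and small: "\<alpha> T * (2 * claim_bound) \<le> 1"
  shows "price \<alpha> \<le> mean_payoff + 4 * claim_bound\<^sup>2 * \<alpha> T"
proof -
  define A where "A = tolerance \<alpha>"
  define x where "x = 4 * claim_bound\<^sup>2 * \<alpha> T"
  have A_pos: "A > 0" using tolerance_pos[OF pos] A_def by simp
  have \<alpha>T: "\<alpha> T > 0" using pos horizon_pos unfolding pos_aversion_def by auto
  have deviation: "\<forall>\<omega>\<in>space M. \<bar>Z \<omega> - mean_payoff\<bar> \<le> 2 * claim_bound"
    using claim_abs_le mean_payoff_abs_le by (smt (verit))
  have "(\<integral>\<omega>. exp (\<alpha> T * (Z \<omega> - mean_payoff)) \<partial>M) \<le> 1 + (\<alpha> T * (2 * claim_bound))\<^sup>2"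
    using exp_moment_centred_le[OF claim_borel _ _ small] deviation \<alpha>T
    unfolding mean_payoff_def by simp
  then have moment: "((\<integral>\<omega>. exp (- \<alpha> T * (mean_payoff - Z \<omega>)) \<partial>M) - 1) / \<alpha> T \<le> x"
    using \<alpha>T unfolding x_def by (simp add: algebra_simps power2_eq_square divide_le_eq)
  have "(\<lambda>\<omega>. mean_payoff - Z \<omega>) \<in> borel_measurable (filt M \<tau> T)"
    using claim_measurable by measurable
  moreover have "\<forall>\<omega>\<in>space M. \<bar>mean_payoff - Z \<omega>\<bar> \<le> 2 * claim_bound"
    using deviation by (simp add: abs_minus_commute)
  ultimately have "min_loss \<alpha> (\<lambda>\<omega>. - mean_payoff + (mean_payoff - Z \<omega>))
      \<le> exp (- (- mean_payoff) / A)
        * (A + ((\<integral>\<omega>. exp (- \<alpha> T * (mean_payoff - Z \<omega>)) \<partial>M) - 1) / \<alpha> T)"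
    unfolding A_def by (rule min_loss_hedge_at_horizon[OF pos])
  also have "\<dots> \<le> exp (mean_payoff / A) * (A + x)"
    using moment by (simp add: mult_le_cancel_left_pos)
  also have "\<dots> \<le> exp (mean_payoff / A) * (A * exp (x / A))"
  proof -
    have "A * (1 + x / A) \<le> A * exp (x / A)"
      using A_pos by (intro mult_left_mono exp_ge_add_one_self) auto
    then have "A + x \<le> A * exp (x / A)" using A_pos by (simp add: distrib_left)
    then show ?thesis by (intro mult_left_mono) auto
  qed
  also have "\<dots> = A * exp ((mean_payoff + x) / A)" by (simp add: add_divide_distrib exp_add)
  finally show ?thesis
    unfolding price_formula[OF pos] x_def[symmetric]
    using mult_ln_le_iff[OF tolerance_pos[OF pos] min_loss_neg_claim_pos[OF pos]]
    unfolding A_def by simp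
qed

text \<open>For (c): on the event \<open>{Z = H\<^sub>\<infinity>}\<close>, of probability \<open>\<rho> > 0\<close>, the price is at least
  \<open>H\<^sub>\<infinity> + A ln \<rho>\<close>.\<close>
lemma price_ge_max_minus:
  obtains \<rho> where "0 < \<rho>" "\<rho> \<le> 1"
    "\<And>\<alpha>. pos_aversion \<alpha> \<Longrightarrow> max_payoff + tolerance \<alpha> * ln \<rho> \<le> price \<alpha>"
proof -
  obtain S where S: "S \<in> sets M" "prob S > 0" "\<forall>\<omega>\<in>S. Z \<omega> = max_payoff"
    using max_payoff_event by blast
  have "max_payoff + tolerance \<alpha> * ln (prob S) \<le> price \<alpha>" if pos: "pos_aversion \<alpha>" for \<alpha>
  proof -
    define A where "A = tolerance \<alpha>"
    have A_pos: "A > 0" using tolerance_pos[OF pos] A_def by simp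
    have "\<forall>\<omega>\<in>space M. \<bar>Z \<omega> / A\<bar> \<le> claim_bound / A"
      using claim_abs_le A_pos by (auto simp: abs_div intro: divide_right_mono)
    then have "integrable M (\<lambda>\<omega>. exp (Z \<omega> / A))"
      using claim_borel by (intro integrable_exp_bounded) auto
    moreover have "integrable M (\<lambda>\<omega>. exp (max_payoff / A) * indicator S \<omega>)"
      using S(1) by (intro integrable_mult_right integrable_real_indicator) (auto simp: less_top[symmetric])
    ultimately have "(\<integral>\<omega>. exp (max_payoff / A) * indicator S \<omega> \<partial>M) \<le> (\<integral>\<omega>. exp (Z \<omega> / A) \<partial>M)"
      using S by (intro integral_mono) (auto simp: indicator_def)
    moreover have "(\<integral>\<omega>. exp (max_payoff / A) * indicator S \<omega> \<partial>M) = exp (max_payoff / A) * prob S"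
      using S(1) by simp
    ultimately have "A * (prob S * exp (max_payoff / A)) \<le> min_loss \<alpha> (\<lambda>\<omega>. - Z \<omega>)"
      using min_loss_neg_claim_lower[OF pos] A_pos unfolding A_def
      by (smt (verit, best) mult.commute mult_left_mono)
    also have "A * (prob S * exp (max_payoff / A)) = A * exp ((max_payoff + A * ln (prob S)) / A)"
      using S(2) A_pos by (simp add: add_divide_distrib exp_add)
    finally show ?thesis
      unfolding price_formula[OF pos]
      using le_mult_ln_iff[OF tolerance_pos[OF pos] min_loss_neg_claim_pos[OF pos]]
      unfolding A_def by simp
  qed
  then show ?thesis using that S(2) prob_le_1 by blast
qed

lemma pos_aversion_scale: "pos_aversion \<alpha> \<Longrightarrow> p > 0 \<Longrightarrow> pos_aversion (\<lambda>t. p * \<alpha> t)"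
  unfolding pos_aversion_def by auto

lemma scale_below:
  assumes pos: "pos_aversion \<alpha>" and \<delta>: "\<delta> > 0"
  shows "\<exists>p>0. \<forall>t\<in>{1..T}. 0 < p * \<alpha> t \<and> p * \<alpha> t < \<delta>"
proof (intro exI conjI ballI)
  have \<alpha>: "\<forall>t\<in>{1..T}. 0 < \<alpha> t" using pos unfolding pos_aversion_def .
  define p where "p = \<delta> / (1 + (\<Sum>t\<in>{1..T}. \<alpha> t))"
  have sum_pos: "1 + (\<Sum>t\<in>{1..T}. \<alpha> t) > 0" using \<alpha> by (smt (verit) sum_nonneg)
  show p: "p > 0" unfolding p_def using \<delta> sum_pos by simp
  fix t assume t: "t \<in> {1..T}"
  have "\<alpha> t < 1 + (\<Sum>t\<in>{1..T}. \<alpha> t)" using \<alpha> t member_le_sum[of t "{1..T}" \<alpha>] by fastforce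
  then have "\<delta> * \<alpha> t < \<delta> * (1 + (\<Sum>t\<in>{1..T}. \<alpha> t))" using \<delta> by simp
  then show "p * \<alpha> t < \<delta>" using sum_pos unfolding p_def by (simp add: field_simps)
  show "0 < p * \<alpha> t" using p \<alpha> t by simp
qed

lemma scale_above:
  assumes pos: "pos_aversion \<alpha>"
  shows "\<exists>p>0. \<forall>t\<in>{1..T}. K < p * \<alpha> t"
proof (intro exI conjI ballI)
  have \<alpha>: "\<forall>t\<in>{1..T}. 0 < \<alpha> t" using pos unfolding pos_aversion_def .
  define p where "p = (\<bar>K\<bar> + 1) * tolerance \<alpha>"
  show "p > 0" unfolding p_def using tolerance_pos[OF pos] by simp
  fix t assume t: "t \<in> {1..T}"
  have "1 / \<alpha> t \<le> tolerance \<alpha>"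
    unfolding tolerance_def using \<alpha> t by (intro member_le_sum) (auto simp: less_imp_le)
  then have "(\<bar>K\<bar> + 1) * (1 / \<alpha> t) * \<alpha> t \<le> p * \<alpha> t"
    unfolding p_def using \<alpha> t by (intro mult_right_mono mult_left_mono) (auto simp: less_imp_le)
  moreover have "\<alpha> t \<noteq> 0" using \<alpha> t by (metis less_irrefl)
  ultimately have "\<bar>K\<bar> + 1 \<le> p * \<alpha> t" by simp
  then show "K < p * \<alpha> t" using abs_ge_self[of K] by linarith
qed

text \<open>\<open>H\<^sub>p\<^sub>\<alpha>(Z) = (A / p) ln (D\<^sub>\<alpha>(-p Z) / A)\<close>: the scale enters only through \<open>D\<^sub>\<alpha>(-p Z)\<close>.\<close>
lemma price_scaled:
  assumes pos: "pos_aversion \<alpha>" and p: "p > 0"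
  shows "price (\<lambda>t. p * \<alpha> t) = tolerance \<alpha> / p * ln (min_loss \<alpha> (\<lambda>\<omega>. p * - Z \<omega>) / tolerance \<alpha>)"
proof -
  have "price (\<lambda>t. p * \<alpha> t)
      = tolerance \<alpha> / p * ln ((min_loss \<alpha> (\<lambda>\<omega>. p * - Z \<omega>) / p) / (tolerance \<alpha> / p))"
    using price_formula[OF pos_aversion_scale[OF pos p]]
      min_loss_scale[OF pos p admissible_neg_claim] tolerance_scale by simp
  then show ?thesis using p by simp
qed

lemma min_loss_scaled_pos:
  assumes pos: "pos_aversion \<alpha>" and p: "p > 0"
  shows "min_loss \<alpha> (\<lambda>\<omega>. p * - Z \<omega>) > 0"
  using min_loss_neg_claim_pos[OF pos_aversion_scale[OF pos p]]
    min_loss_scale[OF pos p admissible_neg_claim] p by (simp add: zero_less_divide_iff)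

text \<open>Changing the scale from \<open>p\<close> to \<open>q\<close> changes \<open>D\<^sub>\<alpha>(-p Z)\<close> at most by the factor
  \<open>exp (\<bar>q - p\<bar> M / A)\<close>, by the shift estimate.\<close>
lemma min_loss_scaled_lipschitz:
  assumes pos: "pos_aversion \<alpha>"
  shows "min_loss \<alpha> (\<lambda>\<omega>. q * - Z \<omega>)
    \<le> exp (\<bar>q - p\<bar> * claim_bound / tolerance \<alpha>) * min_loss \<alpha> (\<lambda>\<omega>. p * - Z \<omega>)"
proof -
  let ?\<Delta> = "\<lambda>\<omega>. \<bar>q - p\<bar> * claim_bound - (q - p) * Z \<omega>"
  have ne: "admissible M \<tau> T r (\<lambda>\<omega>. p * - Z \<omega>) \<noteq> {}"
    using admissible_neg_claim admissible_scale by blast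
  have meas: "?\<Delta> \<in> borel_measurable (filt M \<tau> T)" using claim_measurable by measurable
  have "\<bar>(q - p) * Z \<omega>\<bar> \<le> \<bar>q - p\<bar> * claim_bound" for \<omega>
    using claim_abs_le[of \<omega>] by (simp add: abs_mult mult_left_mono)
  then have bound: "\<forall>\<omega>\<in>space M. \<bar>?\<Delta> \<omega>\<bar> \<le> 2 * (\<bar>q - p\<bar> * claim_bound)"
    and nonneg: "\<forall>\<omega>\<in>space M. ?\<Delta> \<omega> \<ge> 0"
    by (smt (verit))+
  have "\<forall>\<omega>\<in>space M. q * - Z \<omega> = p * - Z \<omega> + - (\<bar>q - p\<bar> * claim_bound) + ?\<Delta> \<omega>"
    by (simp add: algebra_simps)
  from min_loss_shift(1)[OF pos ne meas bound nonneg this] show ?thesis by simp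
qed

lemma price_scaled_continuous:
  assumes pos: "pos_aversion \<alpha>"
  shows "continuous_on {0<..} (\<lambda>p. price (\<lambda>t. p * \<alpha> t))"
proof -
  define A where "A = tolerance \<alpha>"
  have A_pos: "A > 0" using tolerance_pos[OF pos] A_def by simp
  define \<psi> where "\<psi> p = ln (min_loss \<alpha> (\<lambda>\<omega>. p * - Z \<omega>) / A)" for p
  have increment: "\<psi> q - \<psi> p \<le> claim_bound / A * \<bar>q - p\<bar>" if "p > 0" "q > 0" for p q
  proof -
    have D_pos: "min_loss \<alpha> (\<lambda>\<omega>. p * - Z \<omega>) > 0" "min_loss \<alpha> (\<lambda>\<omega>. q * - Z \<omega>) > 0"
      using min_loss_scaled_pos[OF pos] that by auto
    have "\<psi> q \<le> ln (exp (\<bar>q - p\<bar> * claim_bound / A) * (min_loss \<alpha> (\<lambda>\<omega>. p * - Z \<omega>) / A))"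
      unfolding \<psi>_def using min_loss_scaled_lipschitz[OF pos, of q p] D_pos A_pos
      unfolding A_def by (simp add: divide_right_mono)
    also have "\<dots> = ln (exp (\<bar>q - p\<bar> * claim_bound / A)) + \<psi> p"
      unfolding \<psi>_def using D_pos A_pos by (intro ln_mult_pos) auto
    also have "\<dots> = \<bar>q - p\<bar> * claim_bound / A + \<psi> p" by (simp only: ln_exp)
    finally show ?thesis by (simp add: mult.commute)
  qed
  have "(claim_bound / A)-lipschitz_on {0<..} \<psi>"
  proof (rule lipschitz_onI)
    fix x y :: real assume "x \<in> {0<..}" "y \<in> {0<..}"
    then show "dist (\<psi> x) (\<psi> y) \<le> claim_bound / A * dist x y"
      using increment[of x y] increment[of y x] by (simp add: dist_real_def abs_minus_commute)
  qed (use claim_bound_nonneg A_pos in simp)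
  then have "continuous_on {0<..} \<psi>" by (rule lipschitz_on_continuous_on)
  then have "continuous_on {0<..} (\<lambda>p. A / p * \<psi> p)" by (intro continuous_intros) auto
  then show ?thesis
    by (rule continuous_on_eq) (simp add: price_scaled[OF pos] A_def \<psi>_def)
qed

lemma price_tends_to_mean:
  assumes \<epsilon>: "\<epsilon> > 0"
  shows "\<exists>\<delta>>0. \<forall>\<alpha>. (\<forall>t\<in>{1..T}. 0 < \<alpha> t \<and> \<alpha> t < \<delta>) \<longrightarrow> \<bar>price \<alpha> - mean_payoff\<bar> < \<epsilon>"
proof (intro exI conjI allI impI)
  define \<delta> where "\<delta> = min (1 / (2 * claim_bound + 1)) (\<epsilon> / (4 * claim_bound\<^sup>2 + 1))"
  have M: "claim_bound \<ge> 0" by (rule claim_bound_nonneg)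
  show "\<delta> > 0" unfolding \<delta>_def using \<epsilon> M by (simp add: add_nonneg_pos)
  fix \<alpha> assume \<alpha>: "\<forall>t\<in>{1..T}. 0 < \<alpha> t \<and> \<alpha> t < \<delta>"
  then have pos: "pos_aversion \<alpha>" unfolding pos_aversion_def by auto
  have \<alpha>T: "0 < \<alpha> T" "\<alpha> T < \<delta>" using \<alpha> horizon_pos by auto
  have "\<alpha> T * (2 * claim_bound + 1) < 1" "\<alpha> T * (4 * claim_bound\<^sup>2 + 1) < \<epsilon>"
    using \<alpha>T M unfolding \<delta>_def by (simp_all add: less_divide_eq add_nonneg_pos)
  then have "\<alpha> T * (2 * claim_bound) \<le> 1" "4 * claim_bound\<^sup>2 * \<alpha> T < \<epsilon>"
    using \<alpha>T by (simp_all add: algebra_simps)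
  then show "\<bar>price \<alpha> - mean_payoff\<bar> < \<epsilon>"
    using price_le_mean_plus[OF pos] price_ge_mean[OF pos] by fastforce
qed

text \<open>Part (c): \<open>H\<^sub>\<alpha>(Z) \<rightarrow> H\<^sub>\<infinity>\<close> as all \<open>\<alpha> t \<rightarrow> \<infinity>\<close>, since then \<open>A \<le> T / min \<alpha> t \<rightarrow> 0\<close>.\<close>
lemma price_tends_to_max:
  assumes \<epsilon>: "\<epsilon> > 0"
  shows "\<exists>K. \<forall>\<alpha>. (\<forall>t\<in>{1..T}. K < \<alpha> t) \<longrightarrow> \<bar>price \<alpha> - max_payoff\<bar> < \<epsilon>"
proof -
  obtain \<rho> where \<rho>: "0 < \<rho>" "\<rho> \<le> 1"
    and lower: "\<And>\<alpha>. pos_aversion \<alpha> \<Longrightarrow> max_payoff + tolerance \<alpha> * ln \<rho> \<le> price \<alpha>"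
    using price_ge_max_minus by blast
  define L where "L = - ln \<rho>"
  define K where "K = real T * (L + 1) / \<epsilon>"
  have L: "L \<ge> 0" unfolding L_def using \<rho> by simp
  have K: "K > 0" unfolding K_def using \<epsilon> L horizon_pos by simp
  have "\<bar>price \<alpha> - max_payoff\<bar> < \<epsilon>" if \<alpha>: "\<forall>t\<in>{1..T}. K < \<alpha> t" for \<alpha>
  proof -
    have pos: "pos_aversion \<alpha>" using \<alpha> K unfolding pos_aversion_def by force
    have "tolerance \<alpha> \<le> (\<Sum>t\<in>{1..T}. 1 / K)"
      unfolding tolerance_def using \<alpha> K by (intro sum_mono frac_le) (auto simp: less_imp_le)
    also have "\<dots> = \<epsilon> / (L + 1)" unfolding K_def using \<epsilon> L horizon_pos by simp
    finally have "tolerance \<alpha> * L \<le> \<epsilon> / (L + 1) * L" using L by (intro mult_right_mono)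
    also have "\<dots> < \<epsilon>" using \<epsilon> L by (simp add: field_simps)
    finally show ?thesis
      using lower[OF pos] price_le_max[OF pos] unfolding L_def by (simp add: algebra_simps)
  qed
  then show ?thesis by blast
qed

text \<open>Part (d): along every ray \<open>p \<alpha>\<close> the price sweeps out the whole interval
  \<open>(E[Z], H\<^sub>\<infinity>)\<close>, by (b), (c) and continuity in \<open>p\<close>.\<close>
lemma price_scaled_attains:
  assumes pos: "pos_aversion \<alpha>" and \<pi>: "mean_payoff < \<pi>" "\<pi> < max_payoff"
  shows "\<exists>p>0. \<pi> = price (\<lambda>t. p * \<alpha> t)"
proof -
  obtain \<delta> where "\<delta> > 0" and near_mean:
    "\<And>\<beta>. \<forall>t\<in>{1..T}. 0 < \<beta> t \<and> \<beta> t < \<delta> \<Longrightarrow> \<bar>price \<beta> - mean_payoff\<bar> < \<pi> - mean_payoff"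
    using price_tends_to_mean[of "\<pi> - mean_payoff"] \<pi> by auto
  obtain K where near_max:
    "\<And>\<beta>. \<forall>t\<in>{1..T}. K < \<beta> t \<Longrightarrow> \<bar>price \<beta> - max_payoff\<bar> < max_payoff - \<pi>"
    using price_tends_to_max[of "max_payoff - \<pi>"] \<pi> by auto
  obtain p1 where p1: "p1 > 0" "\<forall>t\<in>{1..T}. 0 < p1 * \<alpha> t \<and> p1 * \<alpha> t < \<delta>"
    using scale_below[OF pos \<open>\<delta> > 0\<close>] by blast
  obtain p2 where p2: "p2 > 0" "\<forall>t\<in>{1..T}. K < p2 * \<alpha> t"
    using scale_above[OF pos] by blast
  have "price (\<lambda>t. p1 * \<alpha> t) \<le> \<pi>" using near_mean[OF p1(2)] by linarith
  moreover have "\<pi> \<le> price (\<lambda>t. p2 * \<alpha> t)" using near_max[OF p2(2)] by linarith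
  ultimately show ?thesis
    using continuous_on_pos_reals_attains[OF price_scaled_continuous[OF pos] p1(1) _ p2(1)] by metis
qed

end

theorem theorem4p6:
  fixes M :: "'a measure" and \<tau> :: "'a \<Rightarrow> real" and T :: nat
    and r :: "nat \<Rightarrow> real" and z :: "nat \<Rightarrow> real" and w :: real
  assumes "prob_space M"
    and "\<tau> \<in> borel_measurable M"
    and "\<forall>\<omega>\<in>space M. \<tau> \<omega> > 0"
    and "\<forall>s\<ge>0. measure M {\<omega>\<in>space M. \<tau> \<omega> = s} = 0"
    and "T \<ge> 1"
    and "\<forall>k\<in>{1..T}. r k \<ge> 0"
    and "\<forall>t<T. 0 < hazard M \<tau> t \<and> hazard M \<tau> t < 1"
  defines "Z \<equiv> claim \<tau> T z"
    and "H \<equiv> (\<lambda>\<alpha>. indiff_price M \<tau> T r \<alpha> w (claim \<tau> T z))"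
    and "Hinf \<equiv> Max (z ` {1..T+1})"
  shows
    "(\<forall>\<alpha>. (\<forall>t\<in>{1..T}. 0 < \<alpha> t) \<longrightarrow>
          integral\<^sup>L M Z \<le> H \<alpha> \<and> H \<alpha> \<le> Hinf)
   \<and> (\<forall>\<epsilon>>0. \<exists>\<delta>>0. \<forall>\<alpha>. (\<forall>t\<in>{1..T}. 0 < \<alpha> t \<and> \<alpha> t < \<delta>) \<longrightarrow>
          \<bar>H \<alpha> - integral\<^sup>L M Z\<bar> < \<epsilon>)
   \<and> (\<forall>\<epsilon>>0. \<exists>K. \<forall>\<alpha>. (\<forall>t\<in>{1..T}. K < \<alpha> t) \<longrightarrow>
          \<bar>H \<alpha> - Hinf\<bar> < \<epsilon>)
   \<and> (\<forall>\<pi> \<alpha>. integral\<^sup>L M Z < \<pi> \<and> \<pi> < Hinf \<and> (\<forall>t\<in>{1..T}. 0 < \<alpha> t) \<longrightarrow>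
          (\<exists>p>0. \<pi> = H (\<lambda>t. p * \<alpha> t)))"
proof -
  interpret market: claim_market M \<tau> T r z w
    unfolding claim_market_def default_market_def claim_market_axioms_def default_market_axioms_def
    using assms(1-3,5-7) by blast
  have price: "H = market.price" unfolding H_def market.price_def by simp
  have mean: "integral\<^sup>L M Z = market.mean_payoff" unfolding Z_def market.mean_payoff_def ..
  have max: "Hinf = market.max_payoff" unfolding Hinf_def market.max_payoff_def ..
  show ?thesis
    unfolding price mean max market.pos_aversion_def[symmetric]
    using market.price_ge_mean market.price_le_max market.price_tends_to_mean
      market.price_tends_to_max market.price_scaled_attains by blast
qed

end
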